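(* Let $X$ be a separable real Banach space and let $(\Omega,\beta,\mu)$ be a complete probability measure space. Let $T:\Omega\times X\to X$ be a continuous random mapping such that there are real-valued random variables $\alpha_1,\alpha_2,\alpha_3:\Omega\to[0,\infty)$ with $\alpha_1(\omega)+\alpha_2(\omega)+\alpha_3(\omega)<1$ for all $\omega\in\Omega$ and, for every $\omega\in\Omega$ and all $X$-valued random variables $x_1,x_2:\Omega\to X$, $$\|T(\omega,x_1(\omega))-T(\omega,x_2(\omega))\|\le \alpha_1(\omega)\|x_1(\omega)-x_2(\omega)\|+\alpha_2(\omega)\|x_1(\omega)-T(\omega,x_1(\omega))\|+\alpha_3(\omega)\|x_2(\omega)-T(\omega,x_2(\omega))\|.$$ Then $T$ has a random fixed point, and it is unique (any two random fixed points of $T$ coincide almost surely).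
   Context: An $X$-valued random variable is a map $x:\Omega\to X$ such that $x^{-1}(B)\in\beta$ for every Borel set $B\subseteq X$. A random mapping is a map $T:\Omega\times X\to X$ such that $\omega\mapsto T(\omega,x)$ is an $X$-valued random variable for every fixed $x\in X$. A random mapping $T$ is continuous if the set of $\omega\in\Omega$ for which $x\mapsto T(\omega,x)$ is continuous has $\mu$-measure one. A random fixed point of $T$ is an $X$-valued random variable $x$ with $\mu\{\omega\in\Omega: T(\omega,x(\omega))=x(\omega)\}=1$. *)

theory Defs
  imports "HOL-Probability.Probability"
begin

definition random_var :: "'w measure \<Rightarrow> ('w \<Rightarrow> 'a::topological_space) \<Rightarrow> bool" where
  "random_var M x \<longleftrightarrow> x \<in> borel_measurable M"

definition random_mapping :: "'w measure \<Rightarrow> ('w \<Rightarrow> 'a::topological_space \<Rightarrow> 'a) \<Rightarrow> bool" where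
  "random_mapping M T \<longleftrightarrow> (\<forall>x. random_var M (\<lambda>\<omega>. T \<omega> x))"

definition continuous_random_mapping :: "'w measure \<Rightarrow> ('w \<Rightarrow> 'a::topological_space \<Rightarrow> 'a) \<Rightarrow> bool" where
  "continuous_random_mapping M T \<longleftrightarrow> random_mapping M T \<and>
     {\<omega> \<in> space M. continuous_on UNIV (T \<omega>)} \<in> sets M \<and>
     measure M {\<omega> \<in> space M. continuous_on UNIV (T \<omega>)} = 1"

definition random_fixed_point :: "'w measure \<Rightarrow> ('w \<Rightarrow> 'a::topological_space \<Rightarrow> 'a) \<Rightarrow> ('w \<Rightarrow> 'a) \<Rightarrow> bool" where
  "random_fixed_point M T x \<longleftrightarrow> random_var M x \<and>
     {\<omega> \<in> space M. T \<omega> (x \<omega>) = x \<omega>} \<in> sets M \<and>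
     measure M {\<omega> \<in> space M. T \<omega> (x \<omega>) = x \<omega>} = 1"

end

theory Submission
  imports Defs
begin

text \<open>
  For each fixed \<omega> the map T \<omega> is a Reich contraction: along any orbit consecutive
  distances shrink by the factor (\<alpha>1 + \<alpha>3) / (1 - \<alpha>2) < 1, so the Picard iterates
  starting at 0 converge to a fixed point, which is unique because \<alpha>1 < 1.
  Taking this limit for every \<omega> gives the random fixed point. Its measurability
  comes from that of the iterates: composing a random mapping that is almost surely
  continuous with a random variable gives a random variable, first for simple
  random variables (countably many values) and then by pointwise limits, the
  exceptional null set being absorbed by completeness of the measure.
\<close>

lemma convergent_if_norm_diff_le_geometric:
  fixes u :: "nat \<Rightarrow> 'a::banach"
  assumes le: "\<And>n. norm (u (Suc n) - u n) \<le> C * k ^ n" and "0 \<le> k" "k < 1"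
  shows "convergent u"
proof -
  have "summable (\<lambda>n. C * k ^ n)"
    using assms(2,3) by (intro summable_mult summable_geometric) simp
  then have "summable (\<lambda>n. u (Suc n) - u n)"
    by (rule summable_comparison_test[rotated]) (use le in auto)
  then have "convergent (\<lambda>n. u 0 + (\<Sum>i<n. u (Suc i) - u i))"
    by (intro convergent_add convergent_const) (simp add: summable_iff_convergent[symmetric])
  then show ?thesis
    by (simp add: sum_lessThan_telescope)
qed

locale reich_map =
  fixes S :: "'a::banach \<Rightarrow> 'a" and a1 a2 a3 :: real
  assumes nonneg: "a1 \<ge> 0" "a2 \<ge> 0" "a3 \<ge> 0"
    and sum_less_1: "a1 + a2 + a3 < 1"
    and reich: "\<And>x y. norm (S x - S y)
                  \<le> a1 * norm (x - y) + a2 * norm (x - S x) + a3 * norm (y - S y)"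
begin

lemma norm_diff_iterate_le:
  "norm ((S ^^ Suc (Suc n)) x - (S ^^ Suc n) x)
     \<le> (a1 + a3) / (1 - a2) * norm ((S ^^ Suc n) x - (S ^^ n) x)"
proof -
  let ?d = "\<lambda>n. norm ((S ^^ Suc n) x - (S ^^ n) x)"
  have "?d (Suc n) \<le> a1 * ?d n + a2 * ?d (Suc n) + a3 * ?d n"
    using reich[of "(S ^^ Suc n) x" "(S ^^ n) x"] by (simp add: norm_minus_commute)
  then have "(1 - a2) * ?d (Suc n) \<le> (a1 + a3) * ?d n"
    by (simp add: algebra_simps)
  then show ?thesis
    using nonneg sum_less_1 by (simp add: field_simps)
qed

lemma convergent_orbit: "convergent (\<lambda>n. (S ^^ n) x)"
proof -
  define k where "k = (a1 + a3) / (1 - a2)"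
  define d where "d n = norm ((S ^^ Suc n) x - (S ^^ n) x)" for n
  have k: "0 \<le> k" "k < 1"
    using nonneg sum_less_1 by (auto simp: k_def field_simps)
  have "d n \<le> d 0 * k ^ n" for n
  proof (induction n)
    case (Suc n)
    have "d (Suc n) \<le> k * d n"
      unfolding d_def k_def by (rule norm_diff_iterate_le)
    also have "\<dots> \<le> k * (d 0 * k ^ n)"
      using Suc k by (simp add: mult_left_mono)
    finally show ?case by (simp add: algebra_simps)
  qed simp
  then show ?thesis
    using k unfolding d_def by (intro convergent_if_norm_diff_le_geometric)
qed

text \<open>
  No continuity of S is needed: the Reich inequality for the pair (L, u n) bounds
  norm (S L - u (Suc n)) by a sequence tending to a2 * norm (L - S L).
\<close>
lemma fixed_point_if_orbit_tendsto:
  assumes u: "(\<lambda>n. (S ^^ n) x) \<longlonglongrightarrow> L"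
  shows "S L = L"
proof -
  let ?u = "\<lambda>n. (S ^^ n) x"
  have u': "(\<lambda>n. ?u (Suc n)) \<longlonglongrightarrow> L"
    using u by (rule LIMSEQ_Suc)
  have "(\<lambda>n. norm (S L - ?u (Suc n))) \<longlonglongrightarrow> norm (S L - L)"
    by (intro tendsto_intros u')
  moreover have "(\<lambda>n. a1 * norm (L - ?u n) + a2 * norm (L - S L) + a3 * norm (?u n - ?u (Suc n)))
      \<longlonglongrightarrow> a1 * norm (L - L) + a2 * norm (L - S L) + a3 * norm (L - L)"
    by (intro tendsto_intros u u')
  moreover have "norm (S L - ?u (Suc n))
      \<le> a1 * norm (L - ?u n) + a2 * norm (L - S L) + a3 * norm (?u n - ?u (Suc n))" for n
    using reich[of L "?u n"] by simp
  ultimately have "norm (S L - L) \<le> a2 * norm (S L - L)"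
    by (simp add: LIMSEQ_le norm_minus_commute)
  then have "(1 - a2) * norm (S L - L) \<le> 0"
    by (simp add: algebra_simps)
  then show ?thesis
    using nonneg sum_less_1 by (simp add: mult_le_0_iff)
qed

lemma fixed_point_lim_orbit: "S (lim (\<lambda>n. (S ^^ n) x)) = lim (\<lambda>n. (S ^^ n) x)"
  using convergent_orbit by (intro fixed_point_if_orbit_tendsto) (simp add: convergent_LIMSEQ_iff)

lemma fixed_point_unique:
  assumes "S x = x" "S y = y"
  shows "x = y"
proof -
  have "norm (x - y) \<le> a1 * norm (x - y)"
    using reich[of x y] assms by simp
  then have "(1 - a1) * norm (x - y) \<le> 0"
    by (simp add: algebra_simps)
  then show ?thesis
    using nonneg sum_less_1 by (simp add: mult_le_0_iff)
qed

end

lemma (in complete_measure) measurable_AE_eq: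
  assumes g: "g \<in> measurable M N" and ae: "AE x in M. g x = h x"
    and h: "\<And>x. x \<in> space M \<Longrightarrow> h x \<in> space N"
  shows "h \<in> measurable M N"
proof (rule measurableI)
  fix A assume A: "A \<in> sets N"
  have "AE x in M. x \<in> g -` A \<inter> space M \<longleftrightarrow> x \<in> h -` A \<inter> space M"
    using ae by eventually_elim auto
  moreover have "g -` A \<inter> space M \<in> sets M"
    using g A by (rule measurable_sets)
  ultimately show "h -` A \<inter> space M \<in> sets M"
    by (rule in_sets_AE) auto
qed (rule h)

lemma borel_measurable_compose_AE_continuous:
  fixes T :: "'w \<Rightarrow> 'a::{metric_space, second_countable_topology} \<Rightarrow> 'b::metric_space"
  assumes "complete_measure M"
    and T: "\<And>a. (\<lambda>\<omega>. T \<omega> a) \<in> borel_measurable M"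
    and cont: "AE \<omega> in M. continuous_on UNIV (T \<omega>)"
    and f: "f \<in> borel_measurable M"
  shows "(\<lambda>\<omega>. T \<omega> (f \<omega>)) \<in> borel_measurable M"
proof -
  obtain F where F: "\<And>i. simple_function M (F i)"
    and F_lim: "\<And>\<omega>. \<omega> \<in> space M \<Longrightarrow> (\<lambda>i. F i \<omega>) \<longlonglongrightarrow> f \<omega>"
    using borel_measurable_implies_sequence_metric[OF f, of undefined] by blast
  obtain N where N: "N \<in> null_sets M" "{\<omega> \<in> space M. \<not> continuous_on UNIV (T \<omega>)} \<subseteq> N"
    using cont by (metis AE_E null_setsI)
  have TF: "(\<lambda>\<omega>. T \<omega> (F i \<omega>)) \<in> borel_measurable M" for i
  proof -
    have "F i \<in> measurable M (count_space (F i ` space M))"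
      by (rule measurableI) (auto intro: simple_functionD(2)[OF F])
    moreover have "countable (F i ` space M)"
      using simple_functionD(1)[OF F] by (rule countable_finite)
    ultimately show ?thesis
      using measurable_compose_countable'[where f = "\<lambda>a \<omega>. T \<omega> a", OF T] by simp
  qed
  \<comment> \<open>Changing all functions on the null set N makes the convergence hold everywhere.\<close>
  let ?off_N = "\<lambda>g \<omega>. if \<omega> \<in> N then undefined else g \<omega>"
  have "?off_N (\<lambda>\<omega>. T \<omega> (f \<omega>)) \<in> borel_measurable M"
  proof (rule borel_measurable_LIMSEQ_metric)
    show "?off_N (\<lambda>\<omega>. T \<omega> (F i \<omega>)) \<in> borel_measurable M" for i
      using N(1) by (intro measurable_If_set TF measurable_const) auto
    fix \<omega> assume \<omega>: "\<omega> \<in> space M"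
    show "(\<lambda>i. ?off_N (\<lambda>\<omega>. T \<omega> (F i \<omega>)) \<omega>) \<longlonglongrightarrow> ?off_N (\<lambda>\<omega>. T \<omega> (f \<omega>)) \<omega>"
    proof (cases "\<omega> \<in> N")
      case False
      then have "isCont (T \<omega>) (f \<omega>)"
        using N(2) \<omega> by (auto simp: continuous_on_eq_continuous_at)
      with F_lim[OF \<omega>] False show ?thesis
        by (simp add: isCont_tendsto_compose[where g = "T \<omega>"])
    qed simp
  qed
  moreover have "AE \<omega> in M. ?off_N (\<lambda>\<omega>. T \<omega> (f \<omega>)) \<omega> = T \<omega> (f \<omega>)"
    using AE_not_in[OF N(1)] by eventually_elim simp
  ultimately show ?thesis
    by (rule complete_measure.measurable_AE_eq[OF assms(1)]) simp
qed

lemma borel_measurable_iterates_AE_continuous: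
  fixes T :: "'w \<Rightarrow> 'a::{metric_space, second_countable_topology} \<Rightarrow> 'a"
  assumes "complete_measure M"
    and "\<And>a. (\<lambda>\<omega>. T \<omega> a) \<in> borel_measurable M"
    and "AE \<omega> in M. continuous_on UNIV (T \<omega>)"
    and "f \<in> borel_measurable M"
  shows "(\<lambda>\<omega>. (T \<omega> ^^ n) (f \<omega>)) \<in> borel_measurable M"
proof (induction n)
  case (Suc n)
  then show ?case
    using borel_measurable_compose_AE_continuous[OF assms(1-3)] by simp
qed (simp add: assms(4))

lemma (in prob_space) AE_continuous_random_mapping:
  "continuous_random_mapping M T \<Longrightarrow> AE \<omega> in M. continuous_on UNIV (T \<omega>)"
  unfolding continuous_random_mapping_def by (rule AE_prob_1[THEN AE_mp]) auto

lemma (in prob_space) AE_random_fixed_point: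
  "random_fixed_point M T x \<Longrightarrow> AE \<omega> in M. T \<omega> (x \<omega>) = x \<omega>"
  unfolding random_fixed_point_def by (rule AE_prob_1[THEN AE_mp]) auto

theorem corollary3p3:
  fixes M :: "'w measure"
    and T :: "'w \<Rightarrow> 'a::{banach, second_countable_topology} \<Rightarrow> 'a"
    and \<alpha>1 \<alpha>2 \<alpha>3 :: "'w \<Rightarrow> real"
  assumes "prob_space M" and "complete_measure M"
    and "continuous_random_mapping M T"
    and "random_var M \<alpha>1" and "random_var M \<alpha>2" and "random_var M \<alpha>3"
    and "\<forall>\<omega>\<in>space M. \<alpha>1 \<omega> \<ge> 0 \<and> \<alpha>2 \<omega> \<ge> 0 \<and> \<alpha>3 \<omega> \<ge> 0"
    and "\<forall>\<omega>\<in>space M. \<alpha>1 \<omega> + \<alpha>2 \<omega> + \<alpha>3 \<omega> < 1"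
    and "\<forall>\<omega>\<in>space M. \<forall>x1 x2. random_var M x1 \<longrightarrow> random_var M x2 \<longrightarrow>
           norm (T \<omega> (x1 \<omega>) - T \<omega> (x2 \<omega>))
             \<le> \<alpha>1 \<omega> * norm (x1 \<omega> - x2 \<omega>) + \<alpha>2 \<omega> * norm (x1 \<omega> - T \<omega> (x1 \<omega>))
                + \<alpha>3 \<omega> * norm (x2 \<omega> - T \<omega> (x2 \<omega>))"
  shows "(\<exists>x. random_fixed_point M T x) \<and>
         (\<forall>x y. random_fixed_point M T x \<longrightarrow> random_fixed_point M T y \<longrightarrow>
                 (AE \<omega> in M. x \<omega> = y \<omega>))"
proof -
  interpret prob_space M by fact
  \<comment> \<open>Constant maps are random variables, so the hypothesis gives the deterministic Reich inequality.\<close>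
  have reich: "reich_map (T \<omega>) (\<alpha>1 \<omega>) (\<alpha>2 \<omega>) (\<alpha>3 \<omega>)" if "\<omega> \<in> space M" for \<omega>
    using assms(7,8) assms(9)[rule_format, OF that, of "\<lambda>_. _" "\<lambda>_. _"] that
    by unfold_locales (auto simp: random_var_def)
  have T: "(\<lambda>\<omega>. T \<omega> a) \<in> borel_measurable M" for a
    using assms(3) by (simp add: continuous_random_mapping_def random_mapping_def random_var_def)
  define L where "L \<omega> = lim (\<lambda>n. (T \<omega> ^^ n) 0)" for \<omega>
  have "L \<in> borel_measurable M"
    unfolding L_def using borel_measurable_iterates_AE_continuous[OF assms(2) T
        AE_continuous_random_mapping[OF assms(3)] borel_measurable_const]
    by (rule borel_measurable_lim_metric)
  moreover have "{\<omega> \<in> space M. T \<omega> (L \<omega>) = L \<omega>} = space M"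
    using reich_map.fixed_point_lim_orbit[OF reich] by (auto simp: L_def)
  ultimately have "random_fixed_point M T L"
    by (simp add: random_fixed_point_def random_var_def prob_space)
  moreover have "AE \<omega> in M. x \<omega> = y \<omega>"
    if "random_fixed_point M T x" "random_fixed_point M T y" for x y
    using AE_space AE_random_fixed_point[OF that(1)] AE_random_fixed_point[OF that(2)]
    by eventually_elim (use reich_map.fixed_point_unique[OF reich] in blast)
  ultimately show ?thesis by blast
qed

end
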